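(* Let $K$ be a field and $\nu$ a valuation on $K[x]$. For all nonconstant $f,g\in K[x]$ we have $\epsilon(fg)=\max\{\epsilon(f),\epsilon(g)\}$.
   Context: $\nu:K[x]\to\Gamma\cup\{\infty\}$ is a valuation ($\Gamma$ an ordered abelian group) with $\nu(f)=\infty$ only for $f=0$; $\Gamma'=\Gamma\otimes\mathbb{Q}$ is the divisible hull. For $k\in\mathbb{N}$, $\partial_kf=\frac{1}{k!}\frac{d^kf}{dx^k}$ is the Hasse derivative. For nonconstant $f$, $\epsilon(f)=\max\{(\nu(f)-\nu(\partial_kf))/k\mid 1\le k\le\deg f,\ \partial_kf\neq0\}\in\Gamma'$. *)

theory Defs
  imports "HOL-Computational_Algebra.Polynomial"
begin

definition hasse :: "nat \<Rightarrow> 'a::comm_ring_1 poly \<Rightarrow> 'a poly" where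
  "hasse k f = (\<Sum>i\<le>degree f. monom (of_nat (i choose k) * coeff f i) (i - k))"

text \<open>Valuation on K[x] with values in an ordered abelian group; the value infinity is
  taken by 0 only, so we record the valuation on nonzero polynomials (value at 0 irrelevant).\<close>
definition is_valuation :: "('a::field poly \<Rightarrow> 'g::linordered_ab_group_add) \<Rightarrow> bool" where
  "is_valuation \<nu> \<longleftrightarrow>
     (\<forall>f g. f \<noteq> 0 \<longrightarrow> g \<noteq> 0 \<longrightarrow> \<nu> (f * g) = \<nu> f + \<nu> g) \<and>
     (\<forall>f g. f \<noteq> 0 \<longrightarrow> g \<noteq> 0 \<longrightarrow> f + g \<noteq> 0 \<longrightarrow> min (\<nu> f) (\<nu> g) \<le> \<nu> (f + g))"

text \<open>Elements of the divisible hull \<Gamma> \<otimes> Q are represented by pairs (a, m), m > 0,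
  standing for a/m.  n-fold multiple in an abelian group:\<close>
definition nsmul :: "nat \<Rightarrow> 'g::ab_group_add \<Rightarrow> 'g" where
  "nsmul n a = (\<Sum>_<n. a)"

definition dh_le :: "'g::linordered_ab_group_add \<times> nat \<Rightarrow> 'g \<times> nat \<Rightarrow> bool" where
  "dh_le p q \<longleftrightarrow> nsmul (snd q) (fst p) \<le> nsmul (snd p) (fst q)"

definition dh_eq :: "'g::linordered_ab_group_add \<times> nat \<Rightarrow> 'g \<times> nat \<Rightarrow> bool" where
  "dh_eq p q \<longleftrightarrow> dh_le p q \<and> dh_le q p"

definition dh_max :: "'g::linordered_ab_group_add \<times> nat \<Rightarrow> 'g \<times> nat \<Rightarrow> 'g \<times> nat" where
  "dh_max p q = (if dh_le p q then q else p)"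

definition eps_set :: "('a::field poly \<Rightarrow> 'g::linordered_ab_group_add) \<Rightarrow> 'a poly \<Rightarrow> ('g \<times> nat) set" where
  "eps_set \<nu> f = {(\<nu> f - \<nu> (hasse k f), k) | k. 1 \<le> k \<and> k \<le> degree f \<and> hasse k f \<noteq> 0}"

definition epsilon :: "('a::field poly \<Rightarrow> 'g::linordered_ab_group_add) \<Rightarrow> 'a poly \<Rightarrow> 'g \<times> nat" where
  "epsilon \<nu> f = (SOME p. p \<in> eps_set \<nu> f \<and> (\<forall>q \<in> eps_set \<nu> f. dh_le q p))"

end

theory Submission
  imports Defs
begin

text \<open>
  Write \<open>e\<close> for the larger of \<open>\<epsilon>(f)\<close> and \<open>\<epsilon>(g)\<close>.  Then \<open>\<nu>(\<partial>\<^sub>i f) \<ge> \<nu>(f) - i e\<close> for all \<open>i\<close>,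
  and likewise for \<open>g\<close>; by the Leibniz rule
  \<open>\<partial>\<^sub>k(fg) = \<Sum>\<^sub>i \<partial>\<^sub>i f \<cdot> \<partial>\<^sub>k\<^sub>-\<^sub>i g\<close> and the ultrametric inequality the same bound holds for
  \<open>fg\<close>, so \<open>\<epsilon>(fg) \<le> e\<close>.  Conversely, say \<open>e = \<epsilon>(f)\<close>, and let \<open>i\<^sub>0 \<ge> 1\<close> and \<open>j\<^sub>0 \<ge> 0\<close> be the
  largest indices at which the bounds for \<open>f\<close> and \<open>g\<close> are equalities.  In the Leibniz sum for
  \<open>k = i\<^sub>0 + j\<^sub>0\<close> the term \<open>\<partial>\<^sub>i\<^sub>0 f \<cdot> \<partial>\<^sub>j\<^sub>0 g\<close> has strictly smaller value than every other term,
  so it determines \<open>\<nu>(\<partial>\<^sub>k(fg))\<close>, the bound is an equality for \<open>fg\<close> at \<open>k\<close>, and \<open>\<epsilon>(fg) \<ge> e\<close>.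
  The Leibniz rule comes from the Taylor expansion \<open>f(x + y) = \<Sum>\<^sub>k \<partial>\<^sub>k f(x) y\<^sup>k\<close>.
\<close>

lemma coeff_hasse: "coeff (hasse k f) n = of_nat ((n + k) choose k) * coeff f (n + k)"
proof -
  have "coeff (hasse k f) n =
      (\<Sum>i\<le>degree f. if i - k = n then of_nat (i choose k) * coeff f i else 0)"
    unfolding hasse_def coeff_sum coeff_monom by simp
  also have "\<dots> = (\<Sum>i\<le>degree f. if i = n + k then of_nat (i choose k) * coeff f i else 0)"
    by (intro sum.cong) (auto simp: binomial_eq_0)
  also have "\<dots> = of_nat ((n + k) choose k) * coeff f (n + k)"
    by (auto simp: coeff_eq_0)
  finally show ?thesis .
qed

lemma hasse_0 [simp]: "hasse 0 f = f"
  by (rule poly_eqI) (simp add: coeff_hasse)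

lemma hasse_nonzero_imp_le_degree: "hasse k f \<noteq> 0 \<Longrightarrow> k \<le> degree f"
proof (rule ccontr)
  assume "hasse k f \<noteq> 0" "\<not> k \<le> degree f"
  moreover have "hasse k f = 0" if "degree f < k"
    using that by (intro poly_eqI) (simp add: coeff_hasse coeff_eq_0)
  ultimately show False by simp
qed

lemma hasse_degree_nonzero: "f \<noteq> 0 \<Longrightarrow> hasse (degree f) f \<noteq> 0"
  by (metis coeff_0 coeff_hasse add_0 binomial_n_n leading_coeff_0_iff mult_1 of_nat_1)

text \<open>The polynomial \<open>f(x + y)\<close>, as a polynomial in \<open>y\<close> over \<open>K[x]\<close>.\<close>

definition taylor_shift :: "'a::comm_ring_1 poly \<Rightarrow> 'a poly poly" where
  "taylor_shift f = pcompose (map_poly (\<lambda>c. [:c:]) f) [:[:0, 1:], 1:]"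

lemma map_poly_const_mult:
  "map_poly (\<lambda>c. [:c:]) (f * g) = map_poly (\<lambda>c. [:c:]) f * map_poly (\<lambda>c. [:c::'a::comm_ring_1:]) g"
proof (rule poly_eqI)
  have const_sum: "[:sum h A:] = (\<Sum>i\<in>A. [:h i:])" for A :: "nat set" and h :: "nat \<Rightarrow> 'a"
    using monom_sum[of h A 0] by (simp add: monom_0)
  show "coeff (map_poly (\<lambda>c. [:c:]) (f * g)) n =
      coeff (map_poly (\<lambda>c. [:c:]) f * map_poly (\<lambda>c. [:c:]) g) n" for n
    by (simp add: coeff_map_poly coeff_mult const_sum mult.commute)
qed

lemma taylor_shift_mult: "taylor_shift (f * g) = taylor_shift f * taylor_shift g"
  unfolding taylor_shift_def map_poly_const_mult pcompose_mult ..

lemma coeff_taylor_shift: "coeff (taylor_shift f) k = hasse k f"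
proof -
  let ?y = "[:[:0, 1:], 1:] :: 'a poly poly"
  have "taylor_shift f = (\<Sum>i\<le>degree f. [:[:coeff f i:]:] * ?y ^ i)"
    unfolding taylor_shift_def pcompose_altdef poly_altdef
    by (simp add: map_poly_map_poly degree_map_poly coeff_map_poly o_def)
  then have "coeff (taylor_shift f) k = (\<Sum>i\<le>degree f. [:coeff f i:] * coeff (?y ^ i) k)"
    by (simp add: coeff_sum)
  also have "\<dots> = (\<Sum>i\<le>degree f. monom (of_nat (i choose k) * coeff f i) (i - k))"
  proof (rule sum.cong[OF refl])
    fix i
    show "[:coeff f i:] * coeff (?y ^ i) k = monom (of_nat (i choose k) * coeff f i) (i - k)"
    proof (cases "k \<le> i")
      case True
      then show ?thesis
        by (simp add: coeff_linear_poly_power monom_altdef of_nat_poly)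
    next
      case False
      have "degree (?y ^ i) < k"
        using False degree_power_le[of ?y i] by simp
      then show ?thesis
        using False by (simp add: coeff_eq_0 binomial_eq_0)
    qed
  qed
  finally show ?thesis unfolding hasse_def .
qed

lemma hasse_mult: "hasse k (f * g) = (\<Sum>i\<le>k. hasse i f * hasse (k - i) g)"
  by (simp add: coeff_taylor_shift[symmetric] taylor_shift_mult coeff_mult)

lemma nsmul_0 [simp]: "nsmul 0 a = 0"
  by (simp add: nsmul_def)

lemma nsmul_Suc: "nsmul (Suc n) a = a + nsmul n a"
  by (simp add: nsmul_def add.commute)

lemma nsmul_add_right: "nsmul n (a + b) = nsmul n a + nsmul n b"
  by (simp add: nsmul_def sum.distrib)

lemma nsmul_diff_right: "nsmul n (a - b) = nsmul n a - nsmul n (b::'g::ab_group_add)"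
  by (simp add: nsmul_def sum_subtractf)

lemma nsmul_add_left: "nsmul (m + n) a = nsmul m a + nsmul n (a::'g::ab_group_add)"
  by (induction m) (simp_all add: nsmul_Suc add.assoc)

lemma nsmul_mult: "nsmul (m * n) a = nsmul m (nsmul n (a::'g::ab_group_add))"
  by (induction m) (simp_all add: nsmul_Suc nsmul_add_left)

lemma nsmul_mono: "a \<le> b \<Longrightarrow> nsmul n a \<le> nsmul n (b::'g::linordered_ab_group_add)"
  by (simp add: nsmul_def sum_mono)

lemma nsmul_strict_mono: "a < b \<Longrightarrow> 0 < n \<Longrightarrow> nsmul n a < nsmul n (b::'g::linordered_ab_group_add)"
  unfolding nsmul_def by (rule sum_strict_mono) auto

lemma nsmul_le_iff: "0 < n \<Longrightarrow> nsmul n a \<le> nsmul n b \<longleftrightarrow> a \<le> (b::'g::linordered_ab_group_add)"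
  by (meson linorder_not_le nsmul_mono nsmul_strict_mono)

lemma nsmul_less_iff: "0 < n \<Longrightarrow> nsmul n a < nsmul n b \<longleftrightarrow> a < (b::'g::linordered_ab_group_add)"
  by (meson linorder_not_le nsmul_mono nsmul_strict_mono)

lemma dh_le_refl: "dh_le p (p::'g::linordered_ab_group_add \<times> nat)"
  by (simp add: dh_le_def)

lemma dh_le_total: "dh_le p q \<or> dh_le q (p::'g::linordered_ab_group_add \<times> nat)"
  by (auto simp: dh_le_def)

lemma dh_max_cases: "dh_max p q = p \<or> dh_max p q = q"
  by (simp add: dh_max_def)

lemma dh_le_dh_max: "dh_le p (dh_max p q) \<and> dh_le q (dh_max p (q::'g::linordered_ab_group_add \<times> nat))"
  using dh_le_total[of p q] by (auto simp: dh_max_def dh_le_refl)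

lemma dh_le_trans:
  assumes "dh_le p q" "dh_le q r" "snd q > 0"
  shows "dh_le p (r::'g::linordered_ab_group_add \<times> nat)"
proof -
  obtain x a y b z c where pqr: "p = (x, a)" "q = (y, b)" "r = (z, c)"
    by (cases p, cases q, cases r)
  have xy: "nsmul b x \<le> nsmul a y" and yz: "nsmul c y \<le> nsmul b z" and "b > 0"
    using assms by (auto simp: dh_le_def pqr)
  have "nsmul (b * c) x \<le> nsmul (a * c) y"
    using nsmul_mono[OF xy, of c] by (simp add: nsmul_mult[symmetric] mult.commute)
  also have "\<dots> \<le> nsmul (b * a) z"
    using nsmul_mono[OF yz, of a] by (simp add: nsmul_mult[symmetric] mult.commute)
  finally have "nsmul b (nsmul c x) \<le> nsmul b (nsmul a z)"
    by (simp add: nsmul_mult)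
  then show ?thesis
    using \<open>b > 0\<close> by (simp add: nsmul_le_iff dh_le_def pqr)
qed

lemma finite_has_dh_greatest:
  assumes "finite S" "S \<noteq> {}" "\<forall>p\<in>S. snd p > 0"
  shows "\<exists>p\<in>S. \<forall>q\<in>S. dh_le q (p::'g::linordered_ab_group_add \<times> nat)"
  using assms
proof (induction S rule: finite_ne_induct)
  case (singleton x)
  then show ?case by (simp add: dh_le_refl)
next
  case (insert x F)
  then obtain p where p: "p \<in> F" "\<forall>q\<in>F. dh_le q p" "snd p > 0"
    by auto
  show ?case
  proof (cases "dh_le x p")
    case True
    then show ?thesis using p by auto
  next
    case False
    then have "dh_le p x" using dh_le_total by blast
    then show ?thesis
      using p dh_le_trans[OF _ \<open>dh_le p x\<close>] by (auto simp: dh_le_refl)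
  qed
qed

lemma dh_le_diff_left_iff:
  "dh_le (a - b, i) (e, m) \<longleftrightarrow> nsmul m a \<le> nsmul m b + nsmul i (e::'g::linordered_ab_group_add)"
  by (auto simp: dh_le_def nsmul_diff_right algebra_simps)

lemma dh_le_diff_right_iff:
  "dh_le (e, m) (a - b, i) \<longleftrightarrow> nsmul m b + nsmul i e \<le> nsmul m (a::'g::linordered_ab_group_add)"
  by (auto simp: dh_le_def nsmul_diff_right algebra_simps)

lemma eps_set_finite: "finite (eps_set \<nu> f)"
proof -
  have "eps_set \<nu> f \<subseteq> (\<lambda>k. (\<nu> f - \<nu> (hasse k f), k)) ` {..degree f}"
    unfolding eps_set_def by auto
  then show ?thesis by (rule finite_subset) simp
qed

lemma eps_set_nonempty: "degree f \<ge> 1 \<Longrightarrow> eps_set \<nu> f \<noteq> {}"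
  unfolding eps_set_def using hasse_degree_nonzero[of f] by fastforce

lemma epsilon_spec:
  assumes "degree f \<ge> 1"
  shows "epsilon \<nu> f \<in> eps_set \<nu> f" "\<forall>q\<in>eps_set \<nu> f. dh_le q (epsilon \<nu> f)"
proof -
  have "\<exists>p\<in>eps_set \<nu> f. \<forall>q\<in>eps_set \<nu> f. dh_le q p"
    by (rule finite_has_dh_greatest[OF eps_set_finite eps_set_nonempty[OF assms]])
      (auto simp: eps_set_def)
  then have "\<exists>p. p \<in> eps_set \<nu> f \<and> (\<forall>q\<in>eps_set \<nu> f. dh_le q p)"
    by blast
  then have "epsilon \<nu> f \<in> eps_set \<nu> f \<and> (\<forall>q\<in>eps_set \<nu> f. dh_le q (epsilon \<nu> f))"
    unfolding epsilon_def by (rule someI_ex)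
  then show "epsilon \<nu> f \<in> eps_set \<nu> f" "\<forall>q\<in>eps_set \<nu> f. dh_le q (epsilon \<nu> f)"
    by auto
qed

text \<open>
  The pair \<open>(e, m)\<close> stands for \<open>e / m\<close>.  Unlike in \<open>eps_set\<close>, the index \<open>i = 0\<close> is allowed
  below; it is harmless, as it always satisfies the bound with equality.
\<close>

definition hasse_bounded :: "('a::field poly \<Rightarrow> 'g::linordered_ab_group_add) \<Rightarrow> 'g \<Rightarrow> nat \<Rightarrow> 'a poly \<Rightarrow> bool" where
  "hasse_bounded \<nu> e m f \<longleftrightarrow>
     (\<forall>i. hasse i f \<noteq> 0 \<longrightarrow> nsmul m (\<nu> f) \<le> nsmul m (\<nu> (hasse i f)) + nsmul i e)"

definition hasse_tight_set :: "('a::field poly \<Rightarrow> 'g::linordered_ab_group_add) \<Rightarrow> 'g \<Rightarrow> nat \<Rightarrow> 'a poly \<Rightarrow> nat set" where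
  "hasse_tight_set \<nu> e m f =
     {i. hasse i f \<noteq> 0 \<and> nsmul m (\<nu> f) = nsmul m (\<nu> (hasse i f)) + nsmul i e}"

definition hasse_bound_attained :: "('a::field poly \<Rightarrow> 'g::linordered_ab_group_add) \<Rightarrow> 'g \<Rightarrow> nat \<Rightarrow> 'a poly \<Rightarrow> bool" where
  "hasse_bound_attained \<nu> e m f \<longleftrightarrow> (\<exists>i\<in>hasse_tight_set \<nu> e m f. i \<ge> 1)"

lemma finite_hasse_tight_set: "finite (hasse_tight_set \<nu> e m f)"
  by (rule finite_subset[of _ "{..degree f}"])
    (auto simp: hasse_tight_set_def hasse_nonzero_imp_le_degree)

lemma zero_in_hasse_tight_set: "f \<noteq> 0 \<Longrightarrow> 0 \<in> hasse_tight_set \<nu> e m f"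
  by (simp add: hasse_tight_set_def)

lemma hasse_bounded_iff_epsilon_le:
  assumes "degree f \<ge> 1"
  shows "hasse_bounded \<nu> e m f \<longleftrightarrow> dh_le (epsilon \<nu> f) (e, m)"
proof
  assume "hasse_bounded \<nu> e m f"
  moreover obtain j where "epsilon \<nu> f = (\<nu> f - \<nu> (hasse j f), j)" "hasse j f \<noteq> 0"
    using epsilon_spec(1)[OF assms, where \<nu> = \<nu>] by (auto simp: eps_set_def)
  ultimately show "dh_le (epsilon \<nu> f) (e, m)"
    by (simp add: hasse_bounded_def dh_le_diff_left_iff)
next
  assume le: "dh_le (epsilon \<nu> f) (e, m)"
  have pos: "snd (epsilon \<nu> f) > 0"
    using epsilon_spec(1)[OF assms, where \<nu> = \<nu>] by (auto simp: eps_set_def)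
  have "nsmul m (\<nu> f) \<le> nsmul m (\<nu> (hasse i f)) + nsmul i e" if hi: "hasse i f \<noteq> 0" for i
  proof (cases "i = 0")
    case False
    then have "(\<nu> f - \<nu> (hasse i f), i) \<in> eps_set \<nu> f"
      using hi hasse_nonzero_imp_le_degree[OF hi] by (auto simp: eps_set_def)
    then have "dh_le (\<nu> f - \<nu> (hasse i f), i) (epsilon \<nu> f)"
      using epsilon_spec(2)[OF assms] by blast
    then have "dh_le (\<nu> f - \<nu> (hasse i f), i) (e, m)"
      using dh_le_trans[OF _ le pos] by blast
    then show ?thesis
      unfolding dh_le_diff_left_iff .
  qed simp
  then show "hasse_bounded \<nu> e m f"
    by (simp add: hasse_bounded_def)
qed

lemma epsilon_bound_attained:
  assumes "degree f \<ge> 1" "epsilon \<nu> f = (e, m)"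
  shows "hasse_bound_attained \<nu> e m f" "m > 0"
  using epsilon_spec(1)[OF assms(1), where \<nu> = \<nu>]
  by (auto simp: assms(2) eps_set_def hasse_bound_attained_def hasse_tight_set_def
      nsmul_diff_right)

lemma hasse_bound_attained_imp_le_epsilon:
  assumes "degree f \<ge> 1" "hasse_bound_attained \<nu> e m f"
  shows "dh_le (e, m) (epsilon \<nu> f)"
proof -
  from assms(2) obtain k where k: "k \<ge> 1" "hasse k f \<noteq> 0"
    "nsmul m (\<nu> f) = nsmul m (\<nu> (hasse k f)) + nsmul k e"
    by (auto simp: hasse_bound_attained_def hasse_tight_set_def)
  then have "(\<nu> f - \<nu> (hasse k f), k) \<in> eps_set \<nu> f"
    using hasse_nonzero_imp_le_degree by (auto simp: eps_set_def)
  moreover have "dh_le (e, m) (\<nu> f - \<nu> (hasse k f), k)"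
    using k(3) by (simp add: dh_le_diff_right_iff)
  ultimately show ?thesis
    using epsilon_spec(2)[OF assms(1), where \<nu> = \<nu>] dh_le_trans k(1) by fastforce
qed

context
  fixes \<nu> :: "'a::field poly \<Rightarrow> 'g::linordered_ab_group_add"
  assumes val: "is_valuation \<nu>"
begin

lemma val_mult: "a \<noteq> 0 \<Longrightarrow> b \<noteq> 0 \<Longrightarrow> \<nu> (a * b) = \<nu> a + \<nu> b"
  using val by (auto simp: is_valuation_def)

lemma val_add: "a \<noteq> 0 \<Longrightarrow> b \<noteq> 0 \<Longrightarrow> a + b \<noteq> 0 \<Longrightarrow> min (\<nu> a) (\<nu> b) \<le> \<nu> (a + b)"
  using val by (auto simp: is_valuation_def)

lemma val_uminus: "a \<noteq> 0 \<Longrightarrow> \<nu> (- a) = \<nu> a"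
proof -
  have "\<nu> 1 = 0"
    using val_mult[of 1 1] by simp
  then have "\<nu> (-1) = 0"
    using val_mult[of "-1" "-1"] by simp
  then show "a \<noteq> 0 \<Longrightarrow> \<nu> (- a) = \<nu> a"
    using val_mult[of "-1" a] by simp
qed

lemma val_sum_upclosed:
  assumes "finite S" "\<And>x y. x \<le> y \<Longrightarrow> P x \<Longrightarrow> P y"
    and "\<And>i. i \<in> S \<Longrightarrow> s i \<noteq> 0 \<Longrightarrow> P (\<nu> (s i))"
  shows "sum s S = 0 \<or> P (\<nu> (sum s S))"
  using assms(1,3)
proof (induction S rule: finite_induct)
  case (insert x F)
  then have IH: "sum s F = 0 \<or> P (\<nu> (sum s F))" and sx: "s x = 0 \<or> P (\<nu> (s x))"
    by auto
  show ?case
  proof (cases "s x = 0 \<or> sum s F = 0 \<or> s x + sum s F = 0")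
    case True
    then show ?thesis using IH sx insert.hyps by auto
  next
    case False
    then have "min (\<nu> (s x)) (\<nu> (sum s F)) \<le> \<nu> (sum s (insert x F))"
      using val_add[of "s x" "sum s F"] insert.hyps by simp
    moreover have "P (min (\<nu> (s x)) (\<nu> (sum s F)))"
      using IH sx False by (simp add: min_def)
    ultimately show ?thesis using assms(2) by blast
  qed
qed simp

lemma val_add_eq_if_less:
  assumes "a \<noteq> 0" "b = 0 \<or> \<nu> a < \<nu> b"
  shows "a + b \<noteq> 0" "\<nu> (a + b) = \<nu> a"
proof -
  have "a + b \<noteq> 0 \<and> \<nu> (a + b) = \<nu> a"
  proof (cases "b = 0")
    case False
    then have lt: "\<nu> a < \<nu> b" using assms by auto
    have ne: "a + b \<noteq> 0"
      using lt val_uminus[OF assms(1)] by (metis add_eq_0_iff order.irrefl)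
    have "\<nu> a \<le> \<nu> (a + b)"
      using val_add[OF assms(1) False ne] lt by simp
    moreover have "min (\<nu> (a + b)) (\<nu> b) \<le> \<nu> a"
      using val_add[OF ne, of "- b"] False assms(1) val_uminus[OF False] by simp
    ultimately show ?thesis
      using lt ne by (auto simp: min_def split: if_splits)
  qed (use assms in simp)
  then show "a + b \<noteq> 0" "\<nu> (a + b) = \<nu> a" by auto
qed

text \<open>The weight \<open>m \<nu>(h) + i e\<close> of a term \<open>h y\<^sup>i\<close> in the Taylor expansion is additive.\<close>

lemma val_weight_mult:
  assumes "a \<noteq> 0" "b \<noteq> 0"
  shows "nsmul m (\<nu> (a * b)) + nsmul (i + j) e =
    (nsmul m (\<nu> a) + nsmul i e) + (nsmul m (\<nu> b) + nsmul j e)"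
  using val_mult[OF assms] by (simp add: nsmul_add_right nsmul_add_left algebra_simps)

lemma leibniz_term_weight_ge:
  assumes "hasse_bounded \<nu> e m f" "hasse_bounded \<nu> e m g" "f \<noteq> 0" "g \<noteq> 0"
    and a: "hasse i f \<noteq> 0" and b: "hasse j g \<noteq> 0"
  shows "nsmul m (\<nu> (f * g)) \<le> nsmul m (\<nu> (hasse i f * hasse j g)) + nsmul (i + j) e"
proof -
  have "nsmul m (\<nu> f) + nsmul m (\<nu> g) \<le>
      (nsmul m (\<nu> (hasse i f)) + nsmul i e) + (nsmul m (\<nu> (hasse j g)) + nsmul j e)"
    using assms by (intro add_mono) (auto simp: hasse_bounded_def)
  then show ?thesis
    using val_weight_mult[OF a b] val_weight_mult[OF assms(3,4), of m 0 0] by simp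
qed

lemma leibniz_term_weight_eq:
  assumes "i \<in> hasse_tight_set \<nu> e m f" "j \<in> hasse_tight_set \<nu> e m g" "f \<noteq> 0" "g \<noteq> 0"
  shows "nsmul m (\<nu> (f * g)) = nsmul m (\<nu> (hasse i f * hasse j g)) + nsmul (i + j) e"
  using assms val_weight_mult[of "hasse i f" "hasse j g" m i j e] val_weight_mult[OF assms(3,4), of m 0 0]
  by (simp add: hasse_tight_set_def)

lemma leibniz_term_weight_gt:
  assumes "hasse_bounded \<nu> e m f" "hasse_bounded \<nu> e m g" "f \<noteq> 0" "g \<noteq> 0"
    and a: "hasse i f \<noteq> 0" and b: "hasse j g \<noteq> 0"
    and "i \<notin> hasse_tight_set \<nu> e m f \<or> j \<notin> hasse_tight_set \<nu> e m g"
  shows "nsmul m (\<nu> (f * g)) < nsmul m (\<nu> (hasse i f * hasse j g)) + nsmul (i + j) e"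
proof -
  have "nsmul m (\<nu> f) + nsmul m (\<nu> g) <
      (nsmul m (\<nu> (hasse i f)) + nsmul i e) + (nsmul m (\<nu> (hasse j g)) + nsmul j e)"
    using assms unfolding hasse_bounded_def hasse_tight_set_def
    by (metis (mono_tags, lifting) add_le_less_mono add_less_le_mono mem_Collect_eq order_le_less)
  then show ?thesis
    using val_weight_mult[OF a b] val_weight_mult[OF assms(3,4), of m 0 0] by simp
qed

lemma hasse_bounded_mult:
  assumes bf: "hasse_bounded \<nu> e m f" and bg: "hasse_bounded \<nu> e m g"
    and nz: "f \<noteq> 0" "g \<noteq> 0"
  shows "hasse_bounded \<nu> e m (f * g)"
  unfolding hasse_bounded_def
proof (intro allI impI)
  fix k assume hk: "hasse k (f * g) \<noteq> 0"
  define P where "P x \<longleftrightarrow> nsmul m (\<nu> (f * g)) \<le> nsmul m x + nsmul k e" for x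
  have "(\<Sum>i\<le>k. hasse i f * hasse (k - i) g) = 0 \<or> P (\<nu> (\<Sum>i\<le>k. hasse i f * hasse (k - i) g))"
  proof (rule val_sum_upclosed)
    show "P y" if "x \<le> y" "P x" for x y
      using that nsmul_mono[OF that(1), of m] unfolding P_def by (meson add_right_mono order.trans)
  next
    fix i assume "i \<in> {..k}" "hasse i f * hasse (k - i) g \<noteq> 0"
    then show "P (\<nu> (hasse i f * hasse (k - i) g))"
      using leibniz_term_weight_ge[OF bf bg nz, of i "k - i"] by (simp add: P_def)
  qed simp
  then show "nsmul m (\<nu> (f * g)) \<le> nsmul m (\<nu> (hasse k (f * g))) + nsmul k e"
    using hk by (simp add: hasse_mult P_def)
qed

lemma hasse_bound_attained_mult:
  assumes m: "m > 0"
    and bf: "hasse_bounded \<nu> e m f" and bg: "hasse_bounded \<nu> e m g"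
    and af: "hasse_bound_attained \<nu> e m f" and nz: "f \<noteq> 0" "g \<noteq> 0"
  shows "hasse_bound_attained \<nu> e m (f * g)"
proof -
  let ?T = "hasse_tight_set \<nu> e m"
  define i0 j0 where "i0 = Max (?T f)" and "j0 = Max (?T g)"
  have fin: "finite (?T f)" "finite (?T g)"
    by (rule finite_hasse_tight_set)+
  obtain i1 where i1: "i1 \<in> ?T f" "i1 \<ge> 1"
    using af by (auto simp: hasse_bound_attained_def)
  have i0: "i0 \<in> ?T f" "i0 \<ge> 1"
    using fin(1) i1(1) order_trans[OF i1(2) Max_ge[OF fin(1) i1(1)]] unfolding i0_def
    by (auto intro: Max_in)
  have j0: "j0 \<in> ?T g"
    using fin(2) zero_in_hasse_tight_set[OF nz(2), of \<nu> e m] unfolding j0_def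
    by (intro Max_in) auto
  define k where "k = i0 + j0"
  define t where "t i = hasse i f * hasse (k - i) g" for i
  have t0: "t i0 \<noteq> 0" "nsmul m (\<nu> (f * g)) = nsmul m (\<nu> (t i0)) + nsmul k e"
    using i0(1) j0 leibniz_term_weight_eq[OF i0(1) j0 nz] by (auto simp: t_def k_def hasse_tight_set_def)
  have less: "\<nu> (t i0) < \<nu> (t i)" if i: "i \<le> k" "i \<noteq> i0" "t i \<noteq> 0" for i
  proof -
    have "i0 < i \<or> j0 < k - i"
      using i(1,2) by (auto simp: k_def)
    then have "i \<notin> ?T f \<or> k - i \<notin> ?T g"
      unfolding i0_def j0_def using fin by (meson Max_ge leD)
    then have "nsmul m (\<nu> (t i0)) + nsmul k e < nsmul m (\<nu> (t i)) + nsmul k e"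
      using leibniz_term_weight_gt[OF bf bg nz, of i "k - i"] i t0(2) by (auto simp: t_def)
    then show ?thesis
      using m by (simp add: nsmul_less_iff)
  qed
  have "sum t ({..k} - {i0}) = 0 \<or> \<nu> (t i0) < \<nu> (sum t ({..k} - {i0}))"
    by (rule val_sum_upclosed) (auto intro: less order.strict_trans2)
  moreover have "hasse k (f * g) = t i0 + sum t ({..k} - {i0})"
    unfolding hasse_mult t_def[symmetric] by (subst sum.remove[of _ i0]) (auto simp: k_def)
  ultimately have "hasse k (f * g) \<noteq> 0" "\<nu> (hasse k (f * g)) = \<nu> (t i0)"
    using val_add_eq_if_less[OF t0(1)] by auto
  then show ?thesis
    using t0(2) i0(2) by (auto simp: hasse_bound_attained_def hasse_tight_set_def k_def)
qed

end

theorem mainTheorem5: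
  fixes \<nu> :: "'a::field poly \<Rightarrow> 'g::linordered_ab_group_add"
    and f g :: "'a poly"
  assumes "is_valuation \<nu>"
    and "degree f \<ge> 1" and "degree g \<ge> 1"
  shows "dh_eq (epsilon \<nu> (f * g)) (dh_max (epsilon \<nu> f) (epsilon \<nu> g))"
proof -
  note val = assms(1) and df = assms(2) and dg = assms(3)
  have nz: "f \<noteq> 0" "g \<noteq> 0"
    using df dg by auto
  then have dfg: "degree (f * g) \<ge> 1"
    using df by (simp add: degree_mult_eq)
  obtain e m where em: "dh_max (epsilon \<nu> f) (epsilon \<nu> g) = (e, m)"
    by fastforce
  then have bf: "hasse_bounded \<nu> e m f" and bg: "hasse_bounded \<nu> e m g"
    using dh_le_dh_max hasse_bounded_iff_epsilon_le df dg by metis+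
  have "dh_le (epsilon \<nu> (f * g)) (e, m)"
    using hasse_bounded_mult[OF val bf bg nz] hasse_bounded_iff_epsilon_le[OF dfg] by blast
  moreover
  have "m > 0" and "hasse_bound_attained \<nu> e m f \<or> hasse_bound_attained \<nu> e m g"
    using dh_max_cases em epsilon_bound_attained df dg by metis+
  then have "hasse_bound_attained \<nu> e m (f * g)"
    using hasse_bound_attained_mult[OF val _ bf bg _ nz] hasse_bound_attained_mult[OF val _ bg bf _ nz(2,1)]
    by (metis mult.commute)
  ultimately show ?thesis
    using hasse_bound_attained_imp_le_epsilon[OF dfg] by (simp add: dh_eq_def em)
qed

end
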